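(* Let $G=(V,E)$ be a non-empty finite simple graph with no isolated vertices and no isolated edges, and let $A$ be any set of vertices of $G$ each of which is adjacent to a vertex of degree $1$. Then \[ D_G(x)=\sum_{J\subseteq V\setminus A}(-1)^{|J|}(x+1)^{|V|-|N_G[J]|}=\sum_{\substack{J\subseteq V\setminus A\\|J|\le|V|-\delta(G)}}(-1)^{|J|}\Big[(x+1)^{|V|-|N_G[J]|}-1\Big]. \]
   Context: The domination polynomial is $D_G(x)=\sum_{k=0}^{|V|}d_k(G)x^k$, where $d_k(G)$ is the number of dominating sets of $G$ of cardinality $k$ (a set $S$ is dominating if every vertex not in $S$ is adjacent to a vertex of $S$). $N_G[J]$ is the closed neighbourhood of $J$ (vertices in $J$ or adjacent to a vertex of $J$), and $\delta(G)$ is the minimum degree. An isolated edge is an edge both of whose endpoints have degree $1$. *)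

theory Defs
  imports "HOL-Computational_Algebra.Polynomial"
begin

definition simple_graph :: "'a set \<Rightarrow> ('a \<Rightarrow> 'a \<Rightarrow> bool) \<Rightarrow> bool" where
  "simple_graph V E \<longleftrightarrow> finite V \<and> (\<forall>u v. E u v \<longrightarrow> u \<in> V \<and> v \<in> V)
     \<and> (\<forall>u v. E u v \<longrightarrow> E v u) \<and> (\<forall>v. \<not> E v v)"

definition degree :: "'a set \<Rightarrow> ('a \<Rightarrow> 'a \<Rightarrow> bool) \<Rightarrow> 'a \<Rightarrow> nat" where
  "degree V E v = card {u \<in> V. E v u}"

definition min_degree :: "'a set \<Rightarrow> ('a \<Rightarrow> 'a \<Rightarrow> bool) \<Rightarrow> nat" where
  "min_degree V E = Min (degree V E ` V)"

definition closed_nbhd :: "'a set \<Rightarrow> ('a \<Rightarrow> 'a \<Rightarrow> bool) \<Rightarrow> 'a set \<Rightarrow> 'a set" where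
  "closed_nbhd V E J = J \<union> {u \<in> V. \<exists>j\<in>J. E j u}"

definition dominating :: "'a set \<Rightarrow> ('a \<Rightarrow> 'a \<Rightarrow> bool) \<Rightarrow> 'a set \<Rightarrow> bool" where
  "dominating V E S \<longleftrightarrow> S \<subseteq> V \<and> (\<forall>v \<in> V - S. \<exists>s \<in> S. E v s)"

definition num_dom_sets :: "'a set \<Rightarrow> ('a \<Rightarrow> 'a \<Rightarrow> bool) \<Rightarrow> nat \<Rightarrow> nat" where
  "num_dom_sets V E k = card {S. S \<subseteq> V \<and> dominating V E S \<and> card S = k}"

definition dom_poly :: "'a set \<Rightarrow> ('a \<Rightarrow> 'a \<Rightarrow> bool) \<Rightarrow> int poly" where
  "dom_poly V E = (\<Sum>k\<le>card V. monom (int (num_dom_sets V E k)) k)"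

end

theory Submission
  imports Defs
begin

text \<open>
  A set S dominates G iff it meets N[v] for every vertex v. If a is adjacent to a leaf w, then
  N[w] \<subseteq> N[a], so the condition for v = a is implied by the one for v = w; as no edge joins two
  leaves, these leaves w lie outside A and the conditions for v \<in> V - A suffice. Expanding the
  indicator of "S meets N[v] for all v \<in> V - A" by inclusion-exclusion and summing x^|S| over
  the sets S avoiding N[J] gives the first formula. The second follows because the alternating
  sum over subsets of the non-empty set V - A vanishes, and because N[J] = V as soon as
  |J| > |V| - \<delta>(G), which kills the corresponding terms.
\<close>

lemma sum_Pow_power_card:
  fixes x :: "'b::comm_semiring_1"
  assumes "finite T"
  shows "(\<Sum>S\<in>Pow T. x ^ card S) = (x + 1) ^ card T"
  using prod_add[OF assms, of "\<lambda>_. x" "\<lambda>_. 1"] by simp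

lemma sum_Pow_alternating:
  assumes "finite T" "T \<noteq> {}"
  shows "(\<Sum>S\<in>Pow T. (-1) ^ card S :: 'b::comm_ring_1) = 0"
  using sum_Pow_power_card[OF assms(1), of "-1::'b"] assms by (simp add: power_0_left)

lemma sum_Pow_disjoint_power_card:
  fixes x :: "'b::comm_semiring_1"
  assumes "finite V" "N \<subseteq> V"
  shows "(\<Sum>S\<in>Pow V. of_bool (S \<inter> N = {}) * x ^ card S) = (x + 1) ^ (card V - card N)"
proof -
  have "(\<Sum>S\<in>Pow V. of_bool (S \<inter> N = {}) * x ^ card S) = (\<Sum>S\<in>Pow V \<inter> {S. S \<inter> N = {}}. x ^ card S)"
    using assms(1) by simp
  also have "Pow V \<inter> {S. S \<inter> N = {}} = Pow (V - N)" by auto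
  finally show ?thesis
    using assms by (simp add: sum_Pow_power_card card_Diff_subset finite_subset)
qed

lemma prod_of_bool:
  assumes "finite J"
  shows "(\<Prod>v\<in>J. of_bool (P v) :: 'b::comm_semiring_1) = of_bool (\<forall>v\<in>J. P v)"
  using assms by (induction J rule: finite_induct) auto

lemma of_bool_all_meet_eq_sum_Pow:
  fixes F :: "'a \<Rightarrow> 'c set"
  assumes "finite B"
  shows "(of_bool (\<forall>v\<in>B. S \<inter> F v \<noteq> {}) :: 'b::comm_ring_1)
           = (\<Sum>J\<in>Pow B. (-1) ^ card J * of_bool (S \<inter> (\<Union>v\<in>J. F v) = {}))"
proof -
  have "(of_bool (\<forall>v\<in>B. S \<inter> F v \<noteq> {}) :: 'b) = (\<Prod>v\<in>B. of_bool (S \<inter> F v \<noteq> {}))"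
    by (rule prod_of_bool[OF assms, symmetric])
  also have "\<dots> = (\<Prod>v\<in>B. 1 - of_bool (S \<inter> F v = {}))"
    by (simp only: of_bool_not_iff)
  also have "\<dots> = (\<Sum>J\<in>Pow B. (-1) ^ card J * (\<Prod>v\<in>J. of_bool (S \<inter> F v = {})) * (\<Prod>v\<in>B - J. 1))"
    by (rule prod_diff_conv_sum[OF assms])
  also have "\<dots> = (\<Sum>J\<in>Pow B. (-1) ^ card J * of_bool (S \<inter> (\<Union>v\<in>J. F v) = {}))"
  proof (rule sum.cong[OF refl])
    fix J assume "J \<in> Pow B"
    then have "finite J" using assms finite_subset by auto
    then have "(\<Prod>v\<in>J. of_bool (S \<inter> F v = {})) = (of_bool (S \<inter> (\<Union>v\<in>J. F v) = {}) :: 'b)"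
      by (simp only: prod_of_bool Int_UN_distrib UNION_empty_conv)
    then show "(-1) ^ card J * (\<Prod>v\<in>J. of_bool (S \<inter> F v = {})) * (\<Prod>v\<in>B - J. 1) =
               (-1) ^ card J * (of_bool (S \<inter> (\<Union>v\<in>J. F v) = {}) :: 'b)"
      by simp
  qed
  finally show ?thesis .
qed

lemma dom_poly_eq_sum_Pow:
  assumes "finite V"
  shows "dom_poly V E = (\<Sum>S\<in>Pow V. of_bool (dominating V E S) * [:0, 1:] ^ card S)"
proof -
  let ?D = "Pow V \<inter> {S. dominating V E S}"
  have "(\<Sum>S\<in>Pow V. of_bool (dominating V E S) * [:0, 1:] ^ card S)
          = (\<Sum>S\<in>?D. [:0, 1:] ^ card S :: int poly)"
    using assms by (simp only: sum_of_bool_mult_eq finite_Pow_iff)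
  also have "\<dots> = (\<Sum>k\<le>card V. \<Sum>S\<in>{S\<in>?D. card S = k}. [:0, 1:] ^ card S)"
    by (rule sum.group[symmetric]) (use assms card_mono in auto)
  also have "\<dots> = (\<Sum>k\<le>card V. of_nat (num_dom_sets V E k) * [:0, 1:] ^ k)"
    unfolding num_dom_sets_def by (intro sum.cong) (auto intro!: arg_cong[where f = card])
  also have "\<dots> = dom_poly V E"
    by (simp add: dom_poly_def monom_altdef of_nat_poly)
  finally show ?thesis ..
qed

lemma closed_nbhd_subset: "J \<subseteq> V \<Longrightarrow> closed_nbhd V E J \<subseteq> V"
  unfolding closed_nbhd_def by auto

lemma closed_nbhd_eq_UN: "closed_nbhd V E J = (\<Union>v\<in>J. closed_nbhd V E {v})"
  unfolding closed_nbhd_def by auto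

theorem dom_poly_eq_sum_Pow_closed_nbhd:
  assumes "finite V" "B \<subseteq> V"
    and dominating_iff: "\<And>S. S \<subseteq> V \<Longrightarrow> dominating V E S \<longleftrightarrow> (\<forall>v\<in>B. S \<inter> closed_nbhd V E {v} \<noteq> {})"
  shows "dom_poly V E
           = (\<Sum>J\<in>Pow B. (-1) ^ card J * [:1, 1:] ^ (card V - card (closed_nbhd V E J)))"
proof -
  let ?X = "[:0, 1:] :: int poly"
  let ?avoids = "\<lambda>S J. of_bool (S \<inter> closed_nbhd V E J = {}) :: int poly"
  have "finite B" using assms(1,2) finite_subset by blast
  have indicator: "of_bool (dominating V E S) = (\<Sum>J\<in>Pow B. (-1) ^ card J * ?avoids S J)"
    if "S \<subseteq> V" for S
    using of_bool_all_meet_eq_sum_Pow[OF \<open>finite B\<close>, of S "\<lambda>v. closed_nbhd V E {v}"]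
    by (simp only: dominating_iff[OF that] closed_nbhd_eq_UN[symmetric])
  have "dom_poly V E = (\<Sum>S\<in>Pow V. (\<Sum>J\<in>Pow B. (-1) ^ card J * ?avoids S J) * ?X ^ card S)"
    unfolding dom_poly_eq_sum_Pow[OF assms(1)] by (intro sum.cong) (simp_all add: indicator)
  also have "\<dots> = (\<Sum>J\<in>Pow B. (-1) ^ card J * (\<Sum>S\<in>Pow V. ?avoids S J * ?X ^ card S))"
    by (simp only: sum_distrib_left sum_distrib_right mult.assoc sum.swap[of _ "Pow V"])
  also have "\<dots> = (\<Sum>J\<in>Pow B. (-1) ^ card J * [:1, 1:] ^ (card V - card (closed_nbhd V E J)))"
  proof (rule sum.cong[OF refl])
    fix J assume "J \<in> Pow B"
    then have "closed_nbhd V E J \<subseteq> V" using assms(2) by (intro closed_nbhd_subset) blast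
    then have "(\<Sum>S\<in>Pow V. ?avoids S J * ?X ^ card S) = [:1, 1:] ^ (card V - card (closed_nbhd V E J))"
      by (simp only: sum_Pow_disjoint_power_card[OF assms(1)]) (simp add: one_pCons)
    then show "(-1) ^ card J * (\<Sum>S\<in>Pow V. ?avoids S J * ?X ^ card S)
        = (-1) ^ card J * [:1, 1:] ^ (card V - card (closed_nbhd V E J))"
      by (simp only:)
  qed
  finally show ?thesis .
qed

lemma dominating_iff_meets_closed_nbhds:
  assumes "simple_graph V E" "S \<subseteq> V"
  shows "dominating V E S \<longleftrightarrow> (\<forall>v\<in>V. S \<inter> closed_nbhd V E {v} \<noteq> {})"
  using assms unfolding simple_graph_def dominating_def closed_nbhd_def by blast

lemma dominating_iff_meets_closed_nbhds_outside:
  assumes "simple_graph V E" "S \<subseteq> V"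
    and dominated: "\<forall>a\<in>A. \<exists>w\<in>V - A. closed_nbhd V E {w} \<subseteq> closed_nbhd V E {a}"
  shows "dominating V E S \<longleftrightarrow> (\<forall>v\<in>V - A. S \<inter> closed_nbhd V E {v} \<noteq> {})"
proof -
  have "S \<inter> closed_nbhd V E {a} \<noteq> {}"
    if "\<forall>v\<in>V - A. S \<inter> closed_nbhd V E {v} \<noteq> {}" "a \<in> A" for a
    using that dominated by blast
  then show ?thesis
    using dominating_iff_meets_closed_nbhds[OF assms(1,2)] by blast
qed

lemma closed_nbhd_leaf:
  assumes "simple_graph V E" "E a w" "degree V E w = 1"
  shows "closed_nbhd V E {w} = {w, a}"
proof -
  obtain x where x: "{u\<in>V. E w u} = {x}"
    using assms(3) card_1_singletonE unfolding degree_def by blast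
  have "a \<in> {u\<in>V. E w u}" using assms(1,2) unfolding simple_graph_def by blast
  then show ?thesis using x unfolding closed_nbhd_def by auto
qed

lemma leaf_closed_nbhd_subset_outside:
  assumes "simple_graph V E"
    and no_isolated_edge: "\<not> (\<exists>u v. E u v \<and> degree V E u = 1 \<and> degree V E v = 1)"
    and leaf_adjacent: "\<forall>a\<in>A. \<exists>w. E a w \<and> degree V E w = 1"
    and "a \<in> A"
  shows "\<exists>w\<in>V - A. closed_nbhd V E {w} \<subseteq> closed_nbhd V E {a}"
proof -
  obtain w where w: "E a w" "degree V E w = 1" using leaf_adjacent \<open>a \<in> A\<close> by blast
  have "w \<in> V" using assms(1) w(1) unfolding simple_graph_def by blast
  have "w \<notin> A"
  proof
    assume "w \<in> A"
    then obtain w' where w': "E w w'" "degree V E w' = 1" using leaf_adjacent by blast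
    then have "w' \<in> closed_nbhd V E {w}" "w' \<noteq> w"
      using assms(1) unfolding simple_graph_def closed_nbhd_def by auto
    then have "w' = a" using closed_nbhd_leaf[OF assms(1) w] by blast
    then show False using no_isolated_edge w w' by blast
  qed
  moreover have "closed_nbhd V E {w} \<subseteq> closed_nbhd V E {a}"
    unfolding closed_nbhd_leaf[OF assms(1) w] using w(1) \<open>w \<in> V\<close> by (auto simp: closed_nbhd_def)
  ultimately show ?thesis using \<open>w \<in> V\<close> by blast
qed

lemma closed_nbhd_eq_if_card_gt:
  assumes "simple_graph V E" "J \<subseteq> V" "card V - min_degree V E < card J"
  shows "closed_nbhd V E J = V"
proof -
  have "finite V" using assms(1) unfolding simple_graph_def by blast
  have "v \<in> closed_nbhd V E J" if "v \<in> V - J" for v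
  proof -
    let ?M = "{u\<in>V. E v u}"
    have "min_degree V E \<le> card ?M"
      using \<open>finite V\<close> that unfolding min_degree_def degree_def by simp
    moreover have "card (V - J) = card V - card J" "card J \<le> card V"
      using assms(2) \<open>finite V\<close> by (auto simp: card_Diff_subset finite_subset card_mono)
    ultimately have "\<not> ?M \<subseteq> V - J"
      using assms(3) card_mono[of "V - J" ?M] \<open>finite V\<close> by auto
    then obtain j where "j \<in> J" "E v j" by blast
    then show ?thesis
      using assms(1) that unfolding simple_graph_def closed_nbhd_def by blast
  qed
  then show ?thesis using closed_nbhd_subset[OF assms(2), of E] unfolding closed_nbhd_def by blast
qed

lemma sum_Pow_closed_nbhd_truncate:
  fixes x :: "'b::comm_ring_1"
  assumes "simple_graph V E" "B \<subseteq> V" "B \<noteq> {}"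
  shows "(\<Sum>J\<in>Pow B. (-1) ^ card J * x ^ (card V - card (closed_nbhd V E J)))
       = (\<Sum>J\<in>{J. J \<subseteq> B \<and> card J \<le> card V - min_degree V E}.
            (-1) ^ card J * (x ^ (card V - card (closed_nbhd V E J)) - 1))"
    (is "?full = ?truncated")
proof -
  let ?t = "\<lambda>J. (-1) ^ card J * (x ^ (card V - card (closed_nbhd V E J)) - 1)"
  have "finite B" using assms(1,2) finite_subset unfolding simple_graph_def by blast
  have "?full = (\<Sum>J\<in>Pow B. ?t J) + (\<Sum>J\<in>Pow B. (-1) ^ card J)"
    by (simp add: right_diff_distrib sum_subtractf)
  also have "\<dots> = (\<Sum>J\<in>Pow B. ?t J)"
    using sum_Pow_alternating[OF \<open>finite B\<close> assms(3)] by simp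
  also have "\<dots> = ?truncated"
  proof (rule sum.mono_neutral_right)
    show "\<forall>J\<in>Pow B - {J. J \<subseteq> B \<and> card J \<le> card V - min_degree V E}. ?t J = 0"
    proof
      fix J assume "J \<in> Pow B - {J. J \<subseteq> B \<and> card J \<le> card V - min_degree V E}"
      then have "closed_nbhd V E J = V"
        using assms(2) by (intro closed_nbhd_eq_if_card_gt[OF assms(1)]) auto
      then show "?t J = 0" by simp
    qed
  qed (use \<open>finite B\<close> in auto)
  finally show ?thesis .
qed

theorem corollary5:
  fixes V :: "'a set" and E :: "'a \<Rightarrow> 'a \<Rightarrow> bool" and A :: "'a set"
  assumes "simple_graph V E"
    and "V \<noteq> {}"
    and no_isolated_vertex: "\<forall>v\<in>V. \<exists>u. E v u"
    and no_isolated_edge: "\<not> (\<exists>u v. E u v \<and> degree V E u = 1 \<and> degree V E v = 1)"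
    and "A \<subseteq> V"
    and "\<forall>a\<in>A. \<exists>w. E a w \<and> degree V E w = 1"
  shows "dom_poly V E
           = (\<Sum>J\<in>Pow (V - A). (-1) ^ card J * [:1, 1:] ^ (card V - card (closed_nbhd V E J)))
         \<and> dom_poly V E
           = (\<Sum>J\<in>{J. J \<subseteq> V - A \<and> card J \<le> card V - min_degree V E}.
                (-1) ^ card J * ([:1, 1:] ^ (card V - card (closed_nbhd V E J)) - 1))"
proof -
  have leaf_outside: "\<forall>a\<in>A. \<exists>w\<in>V - A. closed_nbhd V E {w} \<subseteq> closed_nbhd V E {a}"
    using leaf_closed_nbhd_subset_outside[OF assms(1) no_isolated_edge assms(6)] by blast
  have "finite V" using assms(1) unfolding simple_graph_def by blast
  have "V - A \<noteq> {}" using assms(2) leaf_outside by blast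
  have expansion: "dom_poly V E
      = (\<Sum>J\<in>Pow (V - A). (-1) ^ card J * [:1, 1:] ^ (card V - card (closed_nbhd V E J)))"
    using dominating_iff_meets_closed_nbhds_outside[OF assms(1) _] leaf_outside
    by (intro dom_poly_eq_sum_Pow_closed_nbhd[OF \<open>finite V\<close>]) auto
  show ?thesis
    using expansion sum_Pow_closed_nbhd_truncate[OF assms(1) _ \<open>V - A \<noteq> {}\<close>] by auto
qed

end
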